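(* Let $f_1,\dots,f_N:\mathbb{R}^n\to\mathbb{R}$ satisfy the standing assumptions below, let $\Phi(x)=\max_{1\le j\le N}f_j(x)$, let $x_k\in\mathbb{R}^n$, let $G\in\mathbb{R}^{N\times n}$ be the matrix whose $j$-th row is $\nabla f_j(x_k)^T$, and let $f=(f_1(x_k),\dots,f_N(x_k))^T$. If $\lambda$ is a solution of $$\min_{\lambda}\left(\tfrac12\lambda^TGG^T\lambda-f^T\lambda\right)\quad\text{s.t.}\quad \sum_{i=1}^N\lambda_i=1,\ \lambda_i\ge 0,$$ and $p=-G^T\lambda$, then $\Phi'(x_k;p)\le -\tfrac12\|p\|^2$.
   Context: Standing assumptions: (H1) there is $M\in\mathbb{R}$ with $f_j(x)\ge M$ for all $x$ and $j$; (H2) each $f_j\in C^1(\mathbb{R}^n)$ and there is a modulus of continuity $w$ (increasing $w:[0,\infty)\to[0,\infty)$, $w(0)=0$, continuous at $0$) with $\|\nabla f_j(x)-\nabla f_j(y)\|\le w(\|x-y\|)$ for all $x,y$ and $j$. For $g:\mathbb{R}^n\to\mathbb{R}$, the directional derivative is $g'(x;d)=\lim_{t\to0^+}\frac{g(x+td)-g(x)}{t}$ (for $\Phi$ this limit exists for every $x,d$). *)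

theory Defs
  imports "HOL-Analysis.Analysis"
begin

definition max_fun :: "nat \<Rightarrow> (nat \<Rightarrow> 'a \<Rightarrow> real) \<Rightarrow> 'a \<Rightarrow> real" where
  "max_fun N f x = Max ((\<lambda>j. f j x) ` {1..N})"

definition simplex_feasible :: "nat \<Rightarrow> (nat \<Rightarrow> real) \<Rightarrow> bool" where
  "simplex_feasible N lam \<longleftrightarrow> (\<Sum>i=1..N. lam i) = 1 \<and> (\<forall>i\<in>{1..N}. lam i \<ge> 0)"

text \<open>QP objective 1/2 lam^T G G^T lam - f^T lam, where the j-th row of G is
  the gradient g j (at x_k) and the j-th entry of f is fv j (= f_j(x_k)).
  (G G^T)_{ij} = g i \<bullet> g j.\<close>
definition qp_obj :: "nat \<Rightarrow> (nat \<Rightarrow> 'a::real_inner) \<Rightarrow> (nat \<Rightarrow> real) \<Rightarrow> (nat \<Rightarrow> real) \<Rightarrow> real" where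
  "qp_obj N g fv lam =
     1/2 * (\<Sum>i=1..N. \<Sum>j=1..N. lam i * (g i \<bullet> g j) * lam j) - (\<Sum>j=1..N. fv j * lam j)"

definition GT_mult :: "nat \<Rightarrow> (nat \<Rightarrow> 'a::real_vector) \<Rightarrow> (nat \<Rightarrow> real) \<Rightarrow> 'a" where
  "GT_mult N g lam = (\<Sum>j=1..N. lam j *\<^sub>R g j)"

end

theory Submission imports Defs begin

text \<open>First, the one-sided directional derivative of a finite maximum of
  differentiable functions is the maximum of the directional derivatives over the active indices,
  i.e. \<open>\<Phi>'(x\<^sub>k; p) = max {p \<bullet> \<nabla>f\<^sub>j(x\<^sub>k) | f\<^sub>j(x\<^sub>k) = \<Phi>(x\<^sub>k)}\<close>. Second, with
  \<open>v = G\<^sup>T\<lambda> = -p\<close>, optimality of \<open>\<lambda>\<close> against moves towards the vertex \<open>e\<^sub>j\<close> of the simplex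
  gives the first-order condition \<open>v \<bullet> \<nabla>f\<^sub>j(x\<^sub>k) - f\<^sub>j(x\<^sub>k) \<ge> \<parallel>v\<parallel>\<^sup>2 - f\<^sup>T\<lambda>\<close>. For an active
  index \<open>f\<^sub>j(x\<^sub>k) = \<Phi>(x\<^sub>k) \<ge> f\<^sup>T\<lambda>\<close>, hence \<open>p \<bullet> \<nabla>f\<^sub>j(x\<^sub>k) \<le> -\<parallel>p\<parallel>\<^sup>2\<close>.\<close>

definition active_indices :: "'i set \<Rightarrow> ('i \<Rightarrow> 'a \<Rightarrow> real) \<Rightarrow> 'a \<Rightarrow> 'i set" where
  "active_indices S f x = {j \<in> S. f j x = Max ((\<lambda>i. f i x) ` S)}"

lemma active_indices_nonempty:
  assumes "finite S" "S \<noteq> {}"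
  shows "active_indices S f x \<noteq> {}"
proof -
  have "Max ((\<lambda>i. f i x) ` S) \<in> (\<lambda>i. f i x) ` S"
    using assms by (intro Max_in) auto
  then show ?thesis by (auto simp: active_indices_def)
qed

lemma diff_quotient_tendsto_at_right:
  fixes f :: "'a::real_normed_vector \<Rightarrow> real"
  assumes "(f has_derivative f') (at x)"
  shows "((\<lambda>t. (f (x + t *\<^sub>R p) - f x) / t) \<longlongrightarrow> f' p) (at_right 0)"
proof -
  have line: "((\<lambda>t. x + t *\<^sub>R p) has_derivative (\<lambda>t. t *\<^sub>R p)) (at 0)"
    by (auto intro!: derivative_eq_intros)
  have "((\<lambda>t. f (x + t *\<^sub>R p)) has_derivative (\<lambda>t. f' (t *\<^sub>R p))) (at 0)"
    using has_derivative_compose[OF line, of f f'] assms by (simp add: o_def)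
  moreover have "(\<lambda>t. f' (t *\<^sub>R p)) = (*) (f' p)"
    using has_derivative_bounded_linear[OF assms]
    by (auto simp: fun_eq_iff linear_cmul[OF bounded_linear.linear])
  ultimately have "DERIV (\<lambda>t. f (x + t *\<^sub>R p)) 0 :> f' p"
    by (simp add: has_field_derivative_def)
  then have "((\<lambda>t. (f (x + t *\<^sub>R p) - f x) / t) \<longlongrightarrow> f' p) (at 0)"
    by (simp add: DERIV_def)
  then show ?thesis
    by (rule filterlim_mono) (auto simp: at_le)
qed

lemma tendsto_Max_image:
  fixes h :: "'i \<Rightarrow> 'b \<Rightarrow> real"
  assumes "finite S" "S \<noteq> {}" "\<And>j. j \<in> S \<Longrightarrow> (h j \<longlongrightarrow> c j) F"
  shows "((\<lambda>t. Max ((\<lambda>j. h j t) ` S)) \<longlongrightarrow> Max (c ` S)) F"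
  using tendsto_Sup[of S "\<lambda>t j. h j t" c F] assms by (simp add: cSup_eq_Max)

text \<open>Inactive indices stay strictly below an active one near \<open>x\<close>, by continuity.\<close>

lemma eventually_Max_eq_Max_active:
  fixes f :: "'i \<Rightarrow> 'a::topological_space \<Rightarrow> real" and y :: "'b \<Rightarrow> 'a"
  assumes "finite S" "S \<noteq> {}"
    and cont: "\<And>j. j \<in> S \<Longrightarrow> ((\<lambda>t. f j (y t)) \<longlongrightarrow> f j x) F"
  shows "\<forall>\<^sub>F t in F. Max ((\<lambda>j. f j (y t)) ` S) = Max ((\<lambda>j. f j (y t)) ` active_indices S f x)"
proof -
  define A where "A = active_indices S f x"
  obtain i0 where i0: "i0 \<in> A"
    using active_indices_nonempty[OF assms(1,2), of f x] by (auto simp: A_def)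
  have "\<forall>\<^sub>F t in F. f j (y t) \<le> f i0 (y t)" if j: "j \<in> S - A" for j
  proof -
    have "f j x < f i0 x"
      using j i0 assms(1) by (auto simp: A_def active_indices_def less_le)
    moreover have "((\<lambda>t. f i0 (y t) - f j (y t)) \<longlongrightarrow> f i0 x - f j x) F"
      using j i0 by (intro tendsto_diff cont) (auto simp: A_def active_indices_def)
    ultimately have "\<forall>\<^sub>F t in F. 0 < f i0 (y t) - f j (y t)"
      by (intro order_tendstoD(1)) auto
    then show ?thesis by eventually_elim auto
  qed
  then have "\<forall>\<^sub>F t in F. \<forall>j\<in>S - A. f j (y t) \<le> f i0 (y t)"
    using assms(1) by (intro eventually_ball_finite) auto
  then show ?thesis
  proof eventually_elim
    case (elim t)
    have "A \<subseteq> S" by (auto simp: A_def active_indices_def)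
    then show ?case
      using elim i0 assms(1) finite_subset[of A S] unfolding A_def[symmetric]
      by (intro Max_eq_if) blast+
  qed
qed

lemma diff_quotient_Max_tendsto_at_right:
  fixes f :: "'i \<Rightarrow> 'a::real_normed_vector \<Rightarrow> real"
  assumes "finite S" "S \<noteq> {}"
    and deriv: "\<And>j. j \<in> S \<Longrightarrow> (f j has_derivative f' j) (at x)"
  shows "((\<lambda>t. (Max ((\<lambda>j. f j (x + t *\<^sub>R p)) ` S) - Max ((\<lambda>j. f j x) ` S)) / t)
           \<longlongrightarrow> Max ((\<lambda>j. f' j p) ` active_indices S f x)) (at_right 0)"
proof -
  define A where "A = active_indices S f x"
  define \<Phi>x where "\<Phi>x = Max ((\<lambda>j. f j x) ` S)"
  have A: "finite A" "A \<noteq> {}" "A \<subseteq> S"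
    using assms(1) active_indices_nonempty[OF assms(1,2), of f x]
    by (auto simp: A_def active_indices_def)
  have "((\<lambda>t. f j (x + t *\<^sub>R p)) \<longlongrightarrow> f j x) (at_right 0)" if "j \<in> S" for j
  proof -
    have "isCont (f j) (x + 0 *\<^sub>R p)"
      using has_derivative_continuous[OF deriv[OF that]] by simp
    moreover have "((\<lambda>t. x + t *\<^sub>R p) \<longlongrightarrow> x + 0 *\<^sub>R p) (at_right 0)"
      by (intro tendsto_intros)
    ultimately show ?thesis
      using isCont_tendsto_compose by fastforce
  qed
  then have "\<forall>\<^sub>F t in at_right 0. Max ((\<lambda>j. f j (x + t *\<^sub>R p)) ` S) = Max ((\<lambda>j. f j (x + t *\<^sub>R p)) ` A)"
    unfolding A_def by (rule eventually_Max_eq_Max_active[OF assms(1,2)])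
  moreover have "\<forall>\<^sub>F t in at_right 0. (0::real) < t"
    by (simp add: eventually_at_right_less)
  ultimately have "\<forall>\<^sub>F t in at_right 0. Max ((\<lambda>j. (f j (x + t *\<^sub>R p) - f j x) / t) ` A)
      = (Max ((\<lambda>j. f j (x + t *\<^sub>R p)) ` S) - \<Phi>x) / t"
  proof eventually_elim
    case (elim t)
    have "mono (\<lambda>u. (u - \<Phi>x) / t)"
      using elim(2) by (intro monoI) (simp add: divide_right_mono)
    then have "(Max ((\<lambda>j. f j (x + t *\<^sub>R p)) ` A) - \<Phi>x) / t
        = Max ((\<lambda>j. (f j (x + t *\<^sub>R p) - \<Phi>x) / t) ` A)"
      using A by (subst mono_Max_commute) (auto simp: image_image)
    also have "\<dots> = Max ((\<lambda>j. (f j (x + t *\<^sub>R p) - f j x) / t) ` A)"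
      by (intro arg_cong[where f = Max] image_cong) (auto simp: A_def \<Phi>x_def active_indices_def)
    finally show ?case using elim(1) by simp
  qed
  moreover have "((\<lambda>t. Max ((\<lambda>j. (f j (x + t *\<^sub>R p) - f j x) / t) ` A))
      \<longlongrightarrow> Max ((\<lambda>j. f' j p) ` A)) (at_right 0)"
    using A by (intro tendsto_Max_image diff_quotient_tendsto_at_right deriv) auto
  ultimately show ?thesis
    unfolding A_def \<Phi>x_def by (rule Lim_transform_eventually[rotated])
qed

lemma qp_obj_GT_mult:
  "qp_obj N g fv lam = 1/2 * (GT_mult N g lam \<bullet> GT_mult N g lam) - (\<Sum>j=1..N. fv j * lam j)"
  by (simp add: qp_obj_def GT_mult_def inner_sum_left inner_sum_right sum_distrib_left
      algebra_simps inner_commute)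

lemma GT_mult_convex_combination:
  "GT_mult N g (\<lambda>i. (1 - t) * lam i + t * mu i)
     = (1 - t) *\<^sub>R GT_mult N g lam + t *\<^sub>R GT_mult N g mu"
  by (simp add: GT_mult_def scaleR_add_left sum.distrib scaleR_sum_right)

lemma qp_obj_convex_combination:
  fixes N :: nat and g :: "nat \<Rightarrow> 'a::real_inner" and lam mu :: "nat \<Rightarrow> real"
  defines "v \<equiv> GT_mult N g lam" and "u \<equiv> GT_mult N g mu"
  shows "qp_obj N g fv (\<lambda>i. (1 - t) * lam i + t * mu i)
     = qp_obj N g fv lam
       + t * (v \<bullet> (u - v) - ((\<Sum>j=1..N. fv j * mu j) - (\<Sum>j=1..N. fv j * lam j)))
       + t\<^sup>2 / 2 * ((u - v) \<bullet> (u - v))"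
proof -
  have linear_part: "(\<Sum>j=1..N. fv j * ((1 - t) * lam j + t * mu j))
      = (1 - t) * (\<Sum>j=1..N. fv j * lam j) + t * (\<Sum>j=1..N. fv j * mu j)"
    unfolding sum_distrib_left sum.distrib[symmetric] by (rule sum.cong) (auto simp: algebra_simps)
  have quadratic_part: "(1 - t) *\<^sub>R v + t *\<^sub>R u = v + t *\<^sub>R (u - v)"
    by (simp add: algebra_simps)
  show ?thesis
    unfolding qp_obj_GT_mult GT_mult_convex_combination v_def[symmetric] u_def[symmetric]
      linear_part quadratic_part
    by (simp add: inner_add_left inner_add_right inner_commute power2_eq_square algebra_simps)
qed

lemma simplex_feasible_convex_combination:
  assumes "simplex_feasible N lam" "simplex_feasible N mu" "0 \<le> t" "t \<le> 1"
  shows "simplex_feasible N (\<lambda>i. (1 - t) * lam i + t * mu i)"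
  using assms by (simp add: simplex_feasible_def sum.distrib flip: sum_distrib_left)

lemma simplex_feasible_vertex:
  assumes "j \<in> {1..N}"
  shows "simplex_feasible N (\<lambda>i. if i = j then 1 else 0)"
  using assms by (simp add: simplex_feasible_def)

lemma simplex_weighted_sum_le_Max:
  assumes "simplex_feasible N lam"
  shows "(\<Sum>i=1..N. fv i * lam i) \<le> Max (fv ` {1..N})"
proof -
  have "{1..N} \<noteq> {}"
    using assms unfolding simplex_feasible_def by (metis sum.empty zero_neq_one)
  then have "(\<Sum>i=1..N. fv i * lam i) \<le> (\<Sum>i=1..N. Max (fv ` {1..N}) * lam i)"
    using assms by (intro sum_mono mult_right_mono) (auto simp: simplex_feasible_def)
  also have "\<dots> = Max (fv ` {1..N})"
    using assms by (simp add: simplex_feasible_def flip: sum_distrib_left)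
  finally show ?thesis .
qed

text \<open>Moving from \<open>lam\<close> a distance \<open>t\<close> towards \<open>mu\<close> changes the objective by
  \<open>t D + O(t\<^sup>2)\<close>; minimality forces \<open>D \<ge> 0\<close> as \<open>t \<rightarrow> 0\<^sup>+\<close>.\<close>

lemma qp_minimizer_first_order:
  fixes N :: nat and g :: "nat \<Rightarrow> 'a::real_inner"
  assumes lam: "simplex_feasible N lam" and mu: "simplex_feasible N mu"
    and opt: "\<And>mu. simplex_feasible N mu \<Longrightarrow> qp_obj N g fv lam \<le> qp_obj N g fv mu"
  defines "v \<equiv> GT_mult N g lam" and "u \<equiv> GT_mult N g mu"
  shows "(\<Sum>j=1..N. fv j * mu j) - (\<Sum>j=1..N. fv j * lam j) \<le> v \<bullet> (u - v)"
proof -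
  define D where "D = v \<bullet> (u - v) - ((\<Sum>j=1..N. fv j * mu j) - (\<Sum>j=1..N. fv j * lam j))"
  define W where "W = (u - v) \<bullet> (u - v)"
  have "0 \<le> D + t * W / 2" if t: "0 < t" "t \<le> 1" for t
  proof -
    have "qp_obj N g fv lam \<le> qp_obj N g fv (\<lambda>i. (1 - t) * lam i + t * mu i)"
      using t by (intro opt simplex_feasible_convex_combination lam mu) auto
    also have "\<dots> = qp_obj N g fv lam + t * D + t\<^sup>2 / 2 * W"
      unfolding D_def W_def v_def u_def by (rule qp_obj_convex_combination)
    finally have "0 \<le> t * (D + t * W / 2)"
      by (simp add: power2_eq_square algebra_simps)
    then show ?thesis
      using t by (simp add: zero_le_mult_iff)
  qed
  then have "\<forall>\<^sub>F t in at_right 0. 0 \<le> D + t * W / 2"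
    unfolding eventually_at_right_field by (intro exI[of _ 1]) auto
  moreover have "((\<lambda>t. D + t * W / 2) \<longlongrightarrow> D) (at_right 0)"
    by (auto intro!: tendsto_eq_intros)
  ultimately have "0 \<le> D"
    by (intro tendsto_lowerbound) auto
  then show ?thesis by (simp add: D_def)
qed

lemma qp_minimizer_vertex_inequality:
  fixes N :: nat and g :: "nat \<Rightarrow> 'a::real_inner"
  assumes "simplex_feasible N lam"
    and "\<And>mu. simplex_feasible N mu \<Longrightarrow> qp_obj N g fv lam \<le> qp_obj N g fv mu"
    and j: "j \<in> {1..N}"
  defines "v \<equiv> GT_mult N g lam"
  shows "fv j - (\<Sum>i=1..N. fv i * lam i) \<le> v \<bullet> g j - v \<bullet> v"
proof -
  have "GT_mult N g (\<lambda>i. if i = j then 1 else 0) = g j"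
    using j by (simp add: GT_mult_def if_distrib[of "\<lambda>x. x *\<^sub>R _"] cong: if_cong)
  moreover have "(\<Sum>i=1..N. fv i * (if i = j then 1 else 0)) = fv j"
    using j by (simp add: if_distrib cong: if_cong)
  ultimately show ?thesis
    using qp_minimizer_first_order[OF assms(1) simplex_feasible_vertex[OF j] assms(2)]
    by (simp add: v_def inner_diff_right)
qed

lemma qp_minimizer_norm_le_inner_max_index:
  fixes N :: nat and g :: "nat \<Rightarrow> 'a::real_inner"
  assumes lam: "simplex_feasible N lam"
    and opt: "\<And>mu. simplex_feasible N mu \<Longrightarrow> qp_obj N g fv lam \<le> qp_obj N g fv mu"
    and j: "j \<in> {1..N}" "fv j = Max (fv ` {1..N})"
  shows "(norm (GT_mult N g lam))\<^sup>2 \<le> GT_mult N g lam \<bullet> g j"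
  using qp_minimizer_vertex_inequality[OF lam opt j(1)] simplex_weighted_sum_le_Max[OF lam, of fv] j(2)
  by (simp add: power2_norm_eq_inner)

theorem theorem2:
  fixes N :: nat
    and f :: "nat \<Rightarrow> 'a::euclidean_space \<Rightarrow> real"
    and df :: "nat \<Rightarrow> 'a \<Rightarrow> 'a"
    and M :: real
    and w :: "real \<Rightarrow> real"
    and xk :: 'a
    and lam :: "nat \<Rightarrow> real"
  assumes N: "N \<ge> 1"
    and H1: "\<And>j x. j \<in> {1..N} \<Longrightarrow> f j x \<ge> M"
    and grad: "\<And>j x. j \<in> {1..N} \<Longrightarrow> GDERIV (f j) x :> df j x"
    and w_mono: "mono_on {0..} w"
    and w_nonneg: "\<And>t. t \<ge> 0 \<Longrightarrow> w t \<ge> 0"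
    and w0: "w 0 = 0"
    and w_cont: "continuous (at 0 within {0..}) w"
    and H2: "\<And>j x y. j \<in> {1..N} \<Longrightarrow> norm (df j x - df j y) \<le> w (norm (x - y))"
    and lam_feas: "simplex_feasible N lam"
    and lam_opt: "\<And>mu. simplex_feasible N mu \<Longrightarrow>
                    qp_obj N (\<lambda>j. df j xk) (\<lambda>j. f j xk) lam \<le> qp_obj N (\<lambda>j. df j xk) (\<lambda>j. f j xk) mu"
  shows "let p = - GT_mult N (\<lambda>j. df j xk) lam in
         \<exists>L. ((\<lambda>t. (max_fun N f (xk + t *\<^sub>R p) - max_fun N f xk) / t) \<longlongrightarrow> L) (at_right 0)
             \<and> L \<le> - (1/2) * (norm p)^2"
proof -
  define v where "v = GT_mult N (\<lambda>j. df j xk) lam"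
  define p where "p = - v"
  define A where "A = active_indices {1..N} f xk"
  have fin: "finite A" "A \<noteq> {}"
    using N active_indices_nonempty[of "{1..N}" f xk] by (auto simp: A_def active_indices_def)
  have "\<And>j. j \<in> {1..N} \<Longrightarrow> (f j has_derivative (\<lambda>h. h \<bullet> df j xk)) (at xk)"
    using grad by (simp add: gderiv_def)
  then have lim: "((\<lambda>t. (max_fun N f (xk + t *\<^sub>R p) - max_fun N f xk) / t)
      \<longlongrightarrow> Max ((\<lambda>j. p \<bullet> df j xk) ` A)) (at_right 0)"
    unfolding max_fun_def A_def using N by (intro diff_quotient_Max_tendsto_at_right) auto
  have "p \<bullet> df j xk \<le> - (norm p)\<^sup>2" if "j \<in> A" for j
    using qp_minimizer_norm_le_inner_max_index[OF lam_feas lam_opt, of j] that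
    by (simp add: A_def active_indices_def p_def v_def)
  then have "Max ((\<lambda>j. p \<bullet> df j xk) ` A) \<le> - (norm p)\<^sup>2"
    using fin by (subst Max_le_iff) auto
  also have "\<dots> \<le> - (1/2) * (norm p)\<^sup>2"
    by simp
  finally show ?thesis
    using lim by (auto simp: Let_def p_def v_def)
qed

end
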